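(* Let $(\Gamma,d)=(H,\iota,\sigma,m,d)$ be a $\mathbb{Z}/2\mathbb{Z}$-graded skew Brauer graph and $H'\subseteq H$ stable under $\iota$. Let $\Gamma_d=(H_d,\iota_d,\sigma_d,m_d)$ be the covering of $(\Gamma,d)$ and $H'_d=H'\times\mathbb{Z}/2\mathbb{Z}\subseteq H_d$. Then the covering of the graded skew Brauer graph $\mu^+_{H'}(\Gamma,d)$ is the Brauer graph $\mu^+_{H'_d}(\Gamma_d)$.
   Context: A skew Brauer graph is $\Gamma=(H,\iota,\sigma,m)$ with $H$ finite, $\iota$ an involution (possibly with fixed points; $H_\times$ = fixed points, $H_\circ$ = the rest), $\sigma$ a permutation, $m:H\to\mathbb{Z}_{>0}$ constant on $\sigma$-orbits; no half-edge is fixed by both $\iota$ and $\sigma$. A Brauer graph is a skew Brauer graph with $H_\times=\varnothing$. A grading $d:H\to\mathbb{Z}/2\mathbb{Z}$ is $0$-homogeneous if its sum over each $\sigma$-orbit is $0$; then $(\Gamma,d)$ is a graded skew Brauer graph. Its covering is the Brauer graph $\Gamma_d$ with $H_d=H\times\mathbb{Z}/2\mathbb{Z}$ (elements $h_i$), $\iota_d(h_i)=h_{i+1}$ if $h\in H_\times$ and $(\iota h)_i$ if $h\in H_\circ$, $\sigma_d(h_i)=(\sigma h)_{i+d(h)}$, $m_d(h_i)=m(h)$. Sectors and moves: for $H'$ stable under $\iota$, $(h,r)\in H\times\mathbb{Z}_{\ge0}$ is a sector of elements of $H'$ if $r+1$ is the least $r'\ge0$ with $\sigma^{r'}h\notin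 H'$, maximal if moreover $\sigma^{-1}h\notin H'$. The move of a sector gives $\sigma_{(h,r)}=(h\ \ \sigma^{r+1}h)\circ\sigma\circ(\sigma^rh\ \ \iota\sigma^{r+1}h)$ (applied right to left), $m_{(h,r)}(\sigma^ih)=m(\iota\sigma^{r+1}h)$ for $0\le i\le r$, $m_{(h,r)}=m$ elsewhere; in the graded version also $d_{(h,r)}$, defined with $\epsilon=0$ if $\sigma^{r+1}h\in H_\circ$, $\epsilon=1$ if $\sigma^{r+1}h\in H_\times$: $d_{(h,r)}(\iota\sigma^{r+1}h)=-\sum_{i=0}^rd(\sigma^ih)-\epsilon$; $d_{(h,r)}(\sigma^rh)=d(\iota\sigma^{r+1}h)+d(\sigma^rh)+\epsilon$ if $\iota\sigma^{r+1}h\neq\sigma^{-1}h$, else $\sum_{i=-1}^rd(\sigma^ih)+d(\sigma^rh)+\epsilon$; $d_{(h,r)}(\sigma^{-1}h)=\sum_{i=-1}^rd(\sigma^ih)$ if $\iota\sigma^{r+1}h\ne\sigma^{-1}h$, else $d_{(h,r)}(\iota\sigma^{r+1}h)$; $d_{(h,r)}=d$ elsewhere. The (graded) generalized Kauer move $\mu^+_{H'}$ applies successively the (graded) moves of all maximal sectors of elements of $H'$ (independent of order). The covering of $\mu^+_{H'}(\Gamma,d)$ is formed with respect to its grading $d_{H'}$. *)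

theory Defs
  imports Main "HOL-Library.Z2" "HOL-Combinatorics.Permutations" "HOL-Combinatorics.Transposition"
begin

definition skew_brauer_graph ::
  "'h set \<Rightarrow> ('h \<Rightarrow> 'h) \<Rightarrow> ('h \<Rightarrow> 'h) \<Rightarrow> ('h \<Rightarrow> nat) \<Rightarrow> bool" where
  "skew_brauer_graph H \<iota> \<sigma> m \<longleftrightarrow>
     finite H \<and> \<iota> permutes H \<and> (\<forall>h\<in>H. \<iota> (\<iota> h) = h) \<and> \<sigma> permutes H \<and>
     (\<forall>h\<in>H. m h > 0) \<and> (\<forall>h\<in>H. m (\<sigma> h) = m h) \<and>
     (\<forall>h\<in>H. \<not> (\<iota> h = h \<and> \<sigma> h = h))"

definition H_times :: "'h set \<Rightarrow> ('h \<Rightarrow> 'h) \<Rightarrow> 'h set" where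
  "H_times H \<iota> = {h \<in> H. \<iota> h = h}"

definition H_circ :: "'h set \<Rightarrow> ('h \<Rightarrow> 'h) \<Rightarrow> 'h set" where
  "H_circ H \<iota> = {h \<in> H. \<iota> h \<noteq> h}"

definition brauer_graph ::
  "'h set \<Rightarrow> ('h \<Rightarrow> 'h) \<Rightarrow> ('h \<Rightarrow> 'h) \<Rightarrow> ('h \<Rightarrow> nat) \<Rightarrow> bool" where
  "brauer_graph H \<iota> \<sigma> m \<longleftrightarrow> skew_brauer_graph H \<iota> \<sigma> m \<and> H_times H \<iota> = {}"

definition sigma_orbit :: "('h \<Rightarrow> 'h) \<Rightarrow> 'h \<Rightarrow> 'h set" where
  "sigma_orbit \<sigma> h = {(\<sigma> ^^ n) h | n. True}"

definition zero_homogeneous :: "'h set \<Rightarrow> ('h \<Rightarrow> 'h) \<Rightarrow> ('h \<Rightarrow> bit) \<Rightarrow> bool" where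
  "zero_homogeneous H \<sigma> d \<longleftrightarrow> (\<forall>h\<in>H. (\<Sum>x\<in>sigma_orbit \<sigma> h. d x) = 0)"

definition graded_skew_brauer_graph ::
  "'h set \<Rightarrow> ('h \<Rightarrow> 'h) \<Rightarrow> ('h \<Rightarrow> 'h) \<Rightarrow> ('h \<Rightarrow> nat) \<Rightarrow> ('h \<Rightarrow> bit) \<Rightarrow> bool" where
  "graded_skew_brauer_graph H \<iota> \<sigma> m d \<longleftrightarrow>
     skew_brauer_graph H \<iota> \<sigma> m \<and> zero_homogeneous H \<sigma> d"

definition cov_H :: "'h set \<Rightarrow> ('h \<times> bit) set" where
  "cov_H H = H \<times> (UNIV :: bit set)"

definition cov_iota :: "'h set \<Rightarrow> ('h \<Rightarrow> 'h) \<Rightarrow> ('h \<times> bit \<Rightarrow> 'h \<times> bit)" where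
  "cov_iota H \<iota> = (\<lambda>(h, i). if h \<in> H_times H \<iota> then (h, i + 1) else (\<iota> h, i))"

definition cov_sigma :: "'h set \<Rightarrow> ('h \<Rightarrow> 'h) \<Rightarrow> ('h \<Rightarrow> bit) \<Rightarrow> ('h \<times> bit \<Rightarrow> 'h \<times> bit)" where
  "cov_sigma H \<sigma> d = (\<lambda>(h, i). (\<sigma> h, if h \<in> H then i + d h else i))"

definition cov_m :: "('h \<Rightarrow> nat) \<Rightarrow> ('h \<times> bit \<Rightarrow> nat)" where
  "cov_m m = (\<lambda>(h, i). m h)"

definition is_sector :: "'h set \<Rightarrow> ('h \<Rightarrow> 'h) \<Rightarrow> 'h \<Rightarrow> nat \<Rightarrow> bool" where
  "is_sector H' \<sigma> h r \<longleftrightarrow>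
     (\<forall>i\<le>r. (\<sigma> ^^ i) h \<in> H') \<and> (\<sigma> ^^ Suc r) h \<notin> H'"

definition is_max_sector :: "'h set \<Rightarrow> ('h \<Rightarrow> 'h) \<Rightarrow> 'h \<Rightarrow> nat \<Rightarrow> bool" where
  "is_max_sector H' \<sigma> h r \<longleftrightarrow> is_sector H' \<sigma> h r \<and> inv \<sigma> h \<notin> H'"

definition max_sectors :: "'h set \<Rightarrow> ('h \<Rightarrow> 'h) \<Rightarrow> ('h \<times> nat) set" where
  "max_sectors H' \<sigma> = {(h, r). is_max_sector H' \<sigma> h r}"

definition move_sigma :: "('h \<Rightarrow> 'h) \<Rightarrow> ('h \<Rightarrow> 'h) \<Rightarrow> 'h \<Rightarrow> nat \<Rightarrow> ('h \<Rightarrow> 'h)" where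
  "move_sigma \<iota> \<sigma> h r =
     transpose h ((\<sigma> ^^ Suc r) h) \<circ> \<sigma> \<circ> transpose ((\<sigma> ^^ r) h) (\<iota> ((\<sigma> ^^ Suc r) h))"

definition move_m :: "('h \<Rightarrow> 'h) \<Rightarrow> ('h \<Rightarrow> 'h) \<Rightarrow> ('h \<Rightarrow> nat) \<Rightarrow> 'h \<Rightarrow> nat \<Rightarrow> ('h \<Rightarrow> nat)" where
  "move_m \<iota> \<sigma> m h r =
     (\<lambda>x. if \<exists>i\<le>r. x = (\<sigma> ^^ i) h then m (\<iota> ((\<sigma> ^^ Suc r) h)) else m x)"

definition move_d ::
  "'h set \<Rightarrow> ('h \<Rightarrow> 'h) \<Rightarrow> ('h \<Rightarrow> 'h) \<Rightarrow> ('h \<Rightarrow> bit) \<Rightarrow> 'h \<Rightarrow> nat \<Rightarrow> ('h \<Rightarrow> bit)" where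
  "move_d H \<iota> \<sigma> d h r =
     (let s = (\<sigma> ^^ Suc r) h;
          \<epsilon> = (if s \<in> H_times H \<iota> then (1::bit) else 0);
          p = inv \<sigma> h;
          S = (\<Sum>i\<le>r. d ((\<sigma> ^^ i) h));
          dI = - S - \<epsilon>
      in (\<lambda>x. if x = \<iota> s then dI
              else if x = (\<sigma> ^^ r) h then
                (if \<iota> s \<noteq> p then d (\<iota> s) + d ((\<sigma> ^^ r) h) + \<epsilon>
                 else (d p + S) + d ((\<sigma> ^^ r) h) + \<epsilon>)
              else if x = p then
                (if \<iota> s \<noteq> p then d p + S else dI)
              else d x))"

definition move :: "('h \<Rightarrow> 'h) \<Rightarrow> 'h \<times> nat \<Rightarrow> ('h \<Rightarrow> 'h) \<times> ('h \<Rightarrow> nat)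
                      \<Rightarrow> ('h \<Rightarrow> 'h) \<times> ('h \<Rightarrow> nat)" where
  "move \<iota> s st = (case s of (h, r) \<Rightarrow> case st of (\<sigma>, m) \<Rightarrow>
      (move_sigma \<iota> \<sigma> h r, move_m \<iota> \<sigma> m h r))"

definition graded_move :: "'h set \<Rightarrow> ('h \<Rightarrow> 'h) \<Rightarrow> 'h \<times> nat
     \<Rightarrow> ('h \<Rightarrow> 'h) \<times> ('h \<Rightarrow> nat) \<times> ('h \<Rightarrow> bit)
     \<Rightarrow> ('h \<Rightarrow> 'h) \<times> ('h \<Rightarrow> nat) \<times> ('h \<Rightarrow> bit)" where
  "graded_move H \<iota> s st = (case s of (h, r) \<Rightarrow> case st of (\<sigma>, m, d) \<Rightarrow>
      (move_sigma \<iota> \<sigma> h r, move_m \<iota> \<sigma> m h r, move_d H \<iota> \<sigma> d h r))"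

text \<open>Generalized Kauer move: apply successively the moves of all maximal sectors
 of elements of H' (of the original graph), in some enumeration order (the paper
 asserts the result is independent of the order).\<close>
definition kauer_move :: "'h set \<Rightarrow> ('h \<Rightarrow> 'h) \<Rightarrow> ('h \<Rightarrow> 'h) \<Rightarrow> ('h \<Rightarrow> nat)
     \<Rightarrow> ('h \<Rightarrow> 'h) \<times> ('h \<Rightarrow> nat)" where
  "kauer_move H' \<iota> \<sigma> m =
     (let L = (SOME L. distinct L \<and> set L = max_sectors H' \<sigma>)
      in fold (move \<iota>) L (\<sigma>, m))"

definition graded_kauer_move :: "'h set \<Rightarrow> 'h set \<Rightarrow> ('h \<Rightarrow> 'h) \<Rightarrow> ('h \<Rightarrow> 'h)
     \<Rightarrow> ('h \<Rightarrow> nat) \<Rightarrow> ('h \<Rightarrow> bit) \<Rightarrow> ('h \<Rightarrow> 'h) \<times> ('h \<Rightarrow> nat) \<times> ('h \<Rightarrow> bit)" where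
  "graded_kauer_move H H' \<iota> \<sigma> m d =
     (let L = (SOME L. distinct L \<and> set L = max_sectors H' \<sigma>)
      in fold (graded_move H \<iota>) L (\<sigma>, m, d))"

end

theory Submission
  imports Defs
begin

text \<open>The moves of distinct maximal sectors do not interfere, so the generalized Kauer move,
  graded or not, has a closed form independent of the order of the moves: every maximal sector
  (h, r) of H' is cut out of its \<sigma>-cycle and reinserted right after its anchor
  \<iota> (\<sigma>^(r+1) h), it takes over the multiplicity of the anchor, and the grading changes only at
  the anchor, at the last element of the sector and at the \<sigma>-predecessor of h.
  The maximal sectors of H' \<times> \<int>/2 in the covering are exactly the lifts ((h, j), r) of the
  maximal sectors (h, r) of H', and the two closed forms agree on every half-edge of the covering.\<close>

text \<open>Bit sums are kept in additive form, where \<open>ac_simps\<close> and \<open>bit_add_self\<close> apply.\<close>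
declare add_bit_eq_xor [simp del] mult_bit_eq_and [simp del]

lemma bit_add_self [simp]: "(x::bit) + x = 0"
  using bit_not_zero_iff[of x] by auto

lemma finite_UNIV_bit: "finite (UNIV :: bit set)"
proof -
  have "(UNIV :: bit set) = {0, 1}" using bit_not_zero_iff by blast
  then show ?thesis by (metis finite.emptyI finite_insert)
qed

lemma fold_closed_form:
  assumes step: "\<And>T k. T \<subseteq> M \<Longrightarrow> k \<in> M \<Longrightarrow> k \<notin> T \<Longrightarrow> f k (F T) = F (insert k T)"
  shows "distinct L \<Longrightarrow> set L \<subseteq> M \<Longrightarrow> T \<subseteq> M \<Longrightarrow> set L \<inter> T = {}
    \<Longrightarrow> fold f L (F T) = F (T \<union> set L)"
proof (induction L arbitrary: T)
  case Nil
  then show ?case by simp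
next
  case (Cons k L)
  then have "fold f L (F (insert k T)) = F (insert k T \<union> set L)"
    by (intro Cons.IH) auto
  then show ?case using Cons.prems step[of T k] by simp
qed

lemma fold_some_enumeration:
  assumes "finite M"
    and "\<And>T k. T \<subseteq> M \<Longrightarrow> k \<in> M \<Longrightarrow> k \<notin> T \<Longrightarrow> f k (F T) = F (insert k T)"
  shows "fold f (SOME L. distinct L \<and> set L = M) (F {}) = F M"
proof -
  have "\<exists>L. distinct L \<and> set L = M"
    using finite_distinct_list[OF assms(1)] by blast
  then have "distinct (SOME L. distinct L \<and> set L = M) \<and> set (SOME L. distinct L \<and> set L = M) = M"
    by (rule someI_ex)
  then show ?thesis
    using fold_closed_form[of M f F, OF assms(2)] by simp
qed

text \<open>For bijective \<sigma> the test \<open>x = inv \<sigma> h\<close> becomes \<open>\<sigma> x = h\<close>, and the two cases of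
  move_d for \<open>\<iota> s = inv \<sigma> h\<close> merge into one formula.\<close>
lemma move_d_eq:
  assumes "bij \<sigma>" and "(\<sigma> ^^ r) h = l" and "(\<sigma> ^^ Suc r) h = s" and "\<iota> s = b" and "l \<noteq> b"
    and "(\<Sum>i\<le>r. d ((\<sigma> ^^ i) h)) = S" and "(if s \<in> H_times H \<iota> then 1 else 0) = \<epsilon>"
  shows "move_d H \<iota> \<sigma> d h r x =
    (if x = b then S + \<epsilon>
     else if x = l then d b + d l + \<epsilon> + (if \<sigma> b = h then S else 0)
     else d x + (if \<sigma> x = h then S else 0))"
  using assms(1,5) unfolding assms(4)[symmetric] assms(2,3,6,7)[symmetric]
  by (auto simp: move_d_def Let_def ac_simps bij_inv_eq_iff[symmetric] eq_commute[of _ "inv \<sigma> h"])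

section \<open>Maximal sectors\<close>

locale sector_system =
  fixes H' :: "'a set" and \<iota> \<sigma> :: "'a \<Rightarrow> 'a"
  assumes bij_sigma: "bij \<sigma>" and inj_iota: "inj \<iota>"
    and iota_mem_iff: "\<And>x. \<iota> x \<in> H' \<longleftrightarrow> x \<in> H'" and finite_H': "finite H'"
begin

abbreviation sectors :: "('a \<times> nat) set" where
  "sectors \<equiv> max_sectors H' \<sigma>"

definition sec_last :: "'a \<times> nat \<Rightarrow> 'a" where
  "sec_last k = (\<sigma> ^^ snd k) (fst k)"

definition sec_exit :: "'a \<times> nat \<Rightarrow> 'a" where
  "sec_exit k = (\<sigma> ^^ Suc (snd k)) (fst k)"

definition sec_anchor :: "'a \<times> nat \<Rightarrow> 'a" where
  "sec_anchor k = \<iota> (sec_exit k)"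

definition sec_pred :: "'a \<times> nat \<Rightarrow> 'a" where
  "sec_pred k = inv \<sigma> (fst k)"

definition sec_elems :: "'a \<times> nat \<Rightarrow> 'a set" where
  "sec_elems k = {(\<sigma> ^^ i) (fst k) | i. i \<le> snd k}"

lemma mem_sectors_iff:
  "k \<in> sectors \<longleftrightarrow> (\<forall>i\<le>snd k. (\<sigma> ^^ i) (fst k) \<in> H') \<and> sec_exit k \<notin> H' \<and> sec_pred k \<notin> H'"
  by (cases k) (simp add: max_sectors_def is_max_sector_def is_sector_def sec_exit_def sec_pred_def)

lemma inj_sigma: "inj \<sigma>"
  using bij_sigma bij_is_inj by blast

lemma sigma_inv [simp]: "\<sigma> (inv \<sigma> x) = x"
  using bij_sigma by (simp add: bij_is_surj surj_f_inv_f)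

lemma inv_sigma [simp]: "inv \<sigma> (\<sigma> x) = x"
  using inj_sigma by simp

lemma sigma_sec_last [simp]: "\<sigma> (sec_last k) = sec_exit k"
  by (simp add: sec_last_def sec_exit_def)

lemma sigma_sec_pred [simp]: "\<sigma> (sec_pred k) = fst k"
  by (simp add: sec_pred_def)

lemma sigma_eq_iff: "\<sigma> x = \<sigma> y \<longleftrightarrow> x = y"
  using inj_sigma by (simp add: inj_eq)

lemma sigma_eq_fst_iff: "\<sigma> y = fst k \<longleftrightarrow> y = sec_pred k"
  by (metis sigma_eq_iff sigma_sec_pred)

lemma sigma_eq_exit_iff: "\<sigma> y = sec_exit k \<longleftrightarrow> y = sec_last k"
  by (metis sigma_eq_iff sigma_sec_last)

lemma sector_elem_mem: "k \<in> sectors \<Longrightarrow> i \<le> snd k \<Longrightarrow> (\<sigma> ^^ i) (fst k) \<in> H'"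
  by (simp add: mem_sectors_iff)

lemma sector_fst_mem: "k \<in> sectors \<Longrightarrow> fst k \<in> H'"
  using sector_elem_mem[of k 0] by simp

lemma sec_last_mem: "k \<in> sectors \<Longrightarrow> sec_last k \<in> H'"
  by (simp add: sec_last_def sector_elem_mem)

lemma sec_exit_not_mem: "k \<in> sectors \<Longrightarrow> sec_exit k \<notin> H'"
  by (simp add: mem_sectors_iff)

lemma sec_anchor_not_mem: "k \<in> sectors \<Longrightarrow> sec_anchor k \<notin> H'"
  by (simp add: sec_anchor_def iota_mem_iff sec_exit_not_mem)

lemma sec_pred_not_mem: "k \<in> sectors \<Longrightarrow> sec_pred k \<notin> H'"
  by (simp add: mem_sectors_iff)

lemma sec_elems_subset: "k \<in> sectors \<Longrightarrow> sec_elems k \<subseteq> H'"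
  unfolding sec_elems_def using sector_elem_mem[of k] by blast

text \<open>Walking backwards from a later position of a sector would reach the predecessor of the
  other sector, which lies outside H'.\<close>
lemma sector_position_unique_le:
  assumes k: "k \<in> sectors" and k': "k' \<in> sectors" and "i' \<le> snd k'" and "i \<le> i'"
    and eq: "(\<sigma> ^^ i) (fst k) = (\<sigma> ^^ i') (fst k')"
  shows "fst k = fst k' \<and> i = i'"
proof -
  have "(\<sigma> ^^ i) (fst k) = (\<sigma> ^^ i) ((\<sigma> ^^ (i' - i)) (fst k'))"
    using eq \<open>i \<le> i'\<close> by (metis funpow_add le_add_diff_inverse comp_apply)
  then have fst_k: "fst k = (\<sigma> ^^ (i' - i)) (fst k')"
    using inj_fn[OF inj_sigma, of i] by (meson injD)
  have "i' - i = 0"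
  proof (rule ccontr)
    assume "i' - i \<noteq> 0"
    then obtain n where n: "i' - i = Suc n" using not0_implies_Suc by blast
    then have "sec_pred k = (\<sigma> ^^ n) (fst k')"
      using fst_k by (simp add: sec_pred_def)
    moreover have "n \<le> snd k'" using n \<open>i' \<le> snd k'\<close> by linarith
    ultimately show False
      using k k' sec_pred_not_mem sector_elem_mem by metis
  qed
  then show ?thesis using fst_k \<open>i \<le> i'\<close> by simp
qed

lemma sector_position_unique:
  assumes "k \<in> sectors" "k' \<in> sectors" "i \<le> snd k" "i' \<le> snd k'"
    and "(\<sigma> ^^ i) (fst k) = (\<sigma> ^^ i') (fst k')"
  shows "k = k' \<and> i = i'"
proof -
  have fst_eq: "fst k = fst k'" and "i = i'"
    using sector_position_unique_le[OF assms(1,2,4)] sector_position_unique_le[OF assms(2,1,3)]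
      assms(5) nat_le_linear by metis+
  have "snd k = snd k'"
  proof (rule ccontr)
    assume "snd k \<noteq> snd k'"
    then consider "Suc (snd k) \<le> snd k'" | "Suc (snd k') \<le> snd k" by linarith
    then show False
      using assms(1,2) fst_eq sec_exit_not_mem sector_elem_mem unfolding sec_exit_def by cases metis+
  qed
  then show ?thesis using fst_eq \<open>i = i'\<close> by (simp add: prod_eq_iff)
qed

lemma sector_elem_eq_sec_last:
  "k \<in> sectors \<Longrightarrow> j \<in> sectors \<Longrightarrow> i \<le> snd k \<Longrightarrow> (\<sigma> ^^ i) (fst k) = sec_last j \<Longrightarrow> j = k"
  using sector_position_unique[of k j i "snd j"] by (simp add: sec_last_def)

lemma sec_elems_disjoint:
  "k \<in> sectors \<Longrightarrow> j \<in> sectors \<Longrightarrow> x \<in> sec_elems k \<Longrightarrow> x \<in> sec_elems j \<Longrightarrow> j = k"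
  unfolding sec_elems_def using sector_position_unique by blast

lemma inj_on_fst_sectors: "inj_on fst sectors"
  by (rule inj_onI) (use sector_position_unique[of _ _ 0 0] in simp)

lemma inj_on_sec_last: "inj_on sec_last sectors"
proof (rule inj_onI)
  fix k k' assume "k \<in> sectors" "k' \<in> sectors" "sec_last k = sec_last k'"
  then show "k = k'"
    using sector_position_unique[of k k' "snd k" "snd k'"] by (simp add: sec_last_def)
qed

lemma inj_on_sec_exit: "inj_on sec_exit sectors"
  by (rule inj_onI) (metis inj_on_sec_last inj_onD sigma_eq_iff sigma_sec_last)

lemma inj_on_sec_anchor: "inj_on sec_anchor sectors"
  by (rule inj_onI) (metis sec_anchor_def inj_on_sec_exit inj_onD inj_iota injD)

lemma inj_on_sec_pred: "inj_on sec_pred sectors"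
  by (rule inj_onI) (metis inj_on_fst_sectors inj_onD sigma_sec_pred)

lemma finite_sectors: "finite sectors"
proof -
  have "fst ` sectors \<subseteq> H'" using sector_fst_mem by auto
  then show ?thesis
    using finite_H' inj_on_fst_sectors finite_image_iff finite_subset by metis
qed

lemma inv_into_sectors: "inj_on f sectors \<Longrightarrow> T \<subseteq> sectors \<Longrightarrow> j \<in> T \<Longrightarrow> inv_into T f (f j) = j"
  by (meson inj_on_subset inv_into_f_f)

lemma sectors_image_mem_iff:
  "inj_on f sectors \<Longrightarrow> T \<subseteq> sectors \<Longrightarrow> k \<in> sectors \<Longrightarrow> f k \<in> f ` T \<longleftrightarrow> k \<in> T"
  by (simp add: inj_on_image_mem_iff)

lemma not_mem_sec_anchor_image: "T \<subseteq> sectors \<Longrightarrow> x \<in> H' \<Longrightarrow> x \<notin> sec_anchor ` T"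
  using sec_anchor_not_mem by blast

lemma not_mem_sec_pred_image: "T \<subseteq> sectors \<Longrightarrow> x \<in> H' \<Longrightarrow> x \<notin> sec_pred ` T"
  using sec_pred_not_mem by blast

lemma not_mem_sec_last_image: "T \<subseteq> sectors \<Longrightarrow> x \<notin> H' \<Longrightarrow> x \<notin> sec_last ` T"
  using sec_last_mem by blast

section \<open>Closed form of the generalized Kauer move\<close>

text \<open>Closed form of the moves of a set T of maximal sectors: each sector is cut out of
  its \<sigma>-cycle (\<open>skip T\<close>) and reinserted right after its anchor.\<close>
definition skip :: "('a \<times> nat) set \<Rightarrow> 'a \<Rightarrow> 'a" where
  "skip T y = (if y \<in> sec_pred ` T then sec_exit (inv_into T sec_pred y) else \<sigma> y)"

definition moved_sigma :: "('a \<times> nat) set \<Rightarrow> 'a \<Rightarrow> 'a" where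
  "moved_sigma T x =
    (if x \<in> sec_anchor ` T then fst (inv_into T sec_anchor x)
     else if x \<in> sec_last ` T then skip T (sec_anchor (inv_into T sec_last x))
     else skip T x)"

lemma skip_sec_pred: "T \<subseteq> sectors \<Longrightarrow> j \<in> T \<Longrightarrow> skip T (sec_pred j) = sec_exit j"
  by (simp add: skip_def inv_into_sectors[OF inj_on_sec_pred])

lemma skip_other: "y \<notin> sec_pred ` T \<Longrightarrow> skip T y = \<sigma> y"
  by (simp add: skip_def)

lemma skip_eq_fst_iff:
  assumes T: "T \<subseteq> sectors" and k: "k \<in> sectors" "k \<notin> T"
  shows "skip T y = fst k \<longleftrightarrow> y = sec_pred k"
proof (cases "y \<in> sec_pred ` T")
  case True
  then obtain j where j: "j \<in> T" "y = sec_pred j" by blast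
  then have "skip T y \<noteq> fst k"
    using T k skip_sec_pred sec_exit_not_mem sector_fst_mem by (metis subsetD)
  moreover have "y \<noteq> sec_pred k"
    using j T k inj_on_sec_pred by (metis inj_onD subsetD)
  ultimately show ?thesis by simp
next
  case False
  then show ?thesis by (simp add: skip_other sigma_eq_fst_iff)
qed

lemma skip_insert:
  assumes T: "T \<subseteq> sectors" and k: "k \<in> sectors" "k \<notin> T" and y: "y \<noteq> sec_last k"
  shows "transpose (fst k) (sec_exit k) (skip T y) = skip (insert k T) y"
proof -
  have T': "insert k T \<subseteq> sectors" using T k by simp
  consider "y = sec_pred k" | j where "j \<in> T" "y = sec_pred j" | "y \<notin> sec_pred ` insert k T"
    by blast
  then show ?thesis
  proof cases
    case 1
    then show ?thesis
      using skip_eq_fst_iff[OF T k, of "sec_pred k"] skip_sec_pred[OF T', of k] by simp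
  next
    case (2 j)
    then have "sec_exit j \<noteq> fst k" "sec_exit j \<noteq> sec_exit k"
      using T k sec_exit_not_mem sector_fst_mem inj_on_sec_exit by (metis inj_onD subsetD)+
    then show ?thesis
      using 2 skip_sec_pred[OF T] skip_sec_pred[OF T'] by simp
  next
    case 3
    then show ?thesis
      using y by (auto simp: skip_other sigma_eq_fst_iff sigma_eq_exit_iff)
  qed
qed

lemma moved_sigma_anchor: "T \<subseteq> sectors \<Longrightarrow> j \<in> T \<Longrightarrow> moved_sigma T (sec_anchor j) = fst j"
  by (simp add: moved_sigma_def inv_into_sectors[OF inj_on_sec_anchor])

lemma moved_sigma_last:
  assumes "T \<subseteq> sectors" and "j \<in> T"
  shows "moved_sigma T (sec_last j) = skip T (sec_anchor j)"
proof -
  have "sec_last j \<notin> sec_anchor ` T"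
    using assms by (meson not_mem_sec_anchor_image sec_last_mem subsetD)
  then show ?thesis
    unfolding moved_sigma_def using assms inv_into_sectors[OF inj_on_sec_last] by simp
qed

lemma moved_sigma_other:
  "x \<notin> sec_anchor ` T \<Longrightarrow> x \<notin> sec_last ` T \<Longrightarrow> moved_sigma T x = skip T x"
  by (simp add: moved_sigma_def)

lemma moved_sigma_empty: "moved_sigma {} = \<sigma>"
  by (simp add: fun_eq_iff moved_sigma_def skip_def)

lemma sector_elem_notin_images:
  assumes T: "T \<subseteq> sectors" and k: "k \<in> sectors" "k \<notin> T" and i: "i \<le> snd k"
  shows "(\<sigma> ^^ i) (fst k) \<notin> sec_anchor ` T" "(\<sigma> ^^ i) (fst k) \<notin> sec_last ` T"
    "(\<sigma> ^^ i) (fst k) \<notin> sec_pred ` T"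
proof -
  show "(\<sigma> ^^ i) (fst k) \<notin> sec_anchor ` T" "(\<sigma> ^^ i) (fst k) \<notin> sec_pred ` T"
    using sector_elem_mem[OF k(1) i] not_mem_sec_anchor_image[OF T] not_mem_sec_pred_image[OF T]
    by simp_all
  show "(\<sigma> ^^ i) (fst k) \<notin> sec_last ` T"
  proof
    assume "(\<sigma> ^^ i) (fst k) \<in> sec_last ` T"
    then obtain j where "j \<in> T" "(\<sigma> ^^ i) (fst k) = sec_last j" by blast
    then show False using sector_elem_eq_sec_last[OF k(1) _ i] T k(2) by blast
  qed
qed

lemma sec_anchor_notin_images:
  assumes T: "T \<subseteq> sectors" and k: "k \<in> sectors" "k \<notin> T"
  shows "sec_anchor k \<notin> sec_anchor ` T" "sec_anchor k \<notin> sec_last ` T"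
  using sectors_image_mem_iff[OF inj_on_sec_anchor T k(1)] k(2)
    not_mem_sec_last_image[OF T sec_anchor_not_mem[OF k(1)]] by simp_all

lemma moved_sigma_funpow:
  assumes T: "T \<subseteq> sectors" and k: "k \<in> sectors" "k \<notin> T" and "i \<le> Suc (snd k)"
  shows "(moved_sigma T ^^ i) (fst k) = (\<sigma> ^^ i) (fst k)"
  using \<open>i \<le> Suc (snd k)\<close>
proof (induction i)
  case (Suc i)
  then have "i \<le> snd k" by simp
  then show ?case
    using Suc sector_elem_notin_images[OF T k] by (simp add: moved_sigma_other skip_other)
qed simp

lemma moved_sigma_insert_pointwise:
  assumes T: "T \<subseteq> sectors" and k: "k \<in> sectors" "k \<notin> T"
  shows "transpose (fst k) (sec_exit k) (moved_sigma T (transpose (sec_last k) (sec_anchor k) x))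
    = moved_sigma (insert k T) x"
proof -
  have T': "insert k T \<subseteq> sectors" using T k by simp
  have last_k: "sec_last k \<notin> sec_anchor ` T" "sec_last k \<notin> sec_last ` T" "sec_last k \<notin> sec_pred ` T"
    using sector_elem_notin_images[OF T k, of "snd k"] by (simp_all add: sec_last_def)
  have ne: "sec_anchor k \<noteq> sec_last k" "fst k \<noteq> sec_exit k"
    using k sec_anchor_not_mem sec_last_mem sector_fst_mem sec_exit_not_mem by metis+
  consider "x = sec_last k" | "x = sec_anchor k"
    | j where "j \<in> T" "x = sec_anchor j" | j where "j \<in> T" "x = sec_last j"
    | "x \<notin> sec_anchor ` insert k T" "x \<notin> sec_last ` insert k T"
    by blast
  then show ?thesis
  proof cases
    case 1
    then show ?thesis
      using ne sec_anchor_notin_images[OF T k] skip_insert[OF T k ne(1)] by (simp add: moved_sigma_other moved_sigma_last[OF T'])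
  next
    case 2
    then show ?thesis
      using ne last_k by (simp add: moved_sigma_other skip_other moved_sigma_anchor[OF T'])
  next
    case (3 j)
    then have "fst j \<noteq> fst k" "fst j \<noteq> sec_exit k" "sec_anchor j \<noteq> sec_last k"
      "sec_anchor j \<noteq> sec_anchor k"
      using inj_on_sec_anchor T k inj_on_fst_sectors sector_fst_mem sec_exit_not_mem sec_anchor_not_mem sec_last_mem
      by (metis inj_onD subsetD)+
    then show ?thesis
      using 3 T T' moved_sigma_anchor by simp
  next
    case (4 j)
    then have "sec_anchor j \<noteq> sec_last k" "sec_last j \<noteq> sec_anchor k"
      using T k sec_anchor_not_mem sec_last_mem by (metis subsetD)+
    moreover have "sec_last j \<noteq> sec_last k"
      using 4 last_k(2) by (metis image_eqI)
    ultimately show ?thesis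
      using 4 T T' skip_insert[OF T k] moved_sigma_last by simp
  next
    case 5
    then show ?thesis
      using skip_insert[OF T k] by (auto simp: moved_sigma_other)
  qed
qed

lemma moved_sigma_insert:
  assumes T: "T \<subseteq> sectors" and k: "k \<in> sectors" "k \<notin> T"
  shows "move_sigma \<iota> (moved_sigma T) (fst k) (snd k) = moved_sigma (insert k T)"
  using moved_sigma_funpow[OF assms, of "snd k"] moved_sigma_funpow[OF assms, of "Suc (snd k)"]
    moved_sigma_insert_pointwise[OF assms]
  by (simp add: fun_eq_iff move_sigma_def sec_last_def sec_exit_def sec_anchor_def)

lemma bij_moved_sigma: "T \<subseteq> sectors \<Longrightarrow> bij (moved_sigma T)"
proof (induction T rule: infinite_finite_induct)
  case (infinite T)
  then show ?case using finite_sectors finite_subset by blast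
next
  case empty
  then show ?case by (simp add: moved_sigma_empty bij_sigma)
next
  case (insert k T)
  then have "bij (move_sigma \<iota> (moved_sigma T) (fst k) (snd k))"
    by (simp add: move_sigma_def bij_comp)
  then show ?case
    using moved_sigma_insert[of T k] insert.hyps insert.prems by simp
qed

definition moved_m :: "('a \<Rightarrow> nat) \<Rightarrow> ('a \<times> nat) set \<Rightarrow> 'a \<Rightarrow> nat" where
  "moved_m m T x =
    (if \<exists>j\<in>T. x \<in> sec_elems j then m (sec_anchor (SOME j. j \<in> T \<and> x \<in> sec_elems j)) else m x)"

lemma moved_m_elem: "T \<subseteq> sectors \<Longrightarrow> j \<in> T \<Longrightarrow> x \<in> sec_elems j \<Longrightarrow> moved_m m T x = m (sec_anchor j)"
  unfolding moved_m_def
  by (rule someI2[of "\<lambda>j'. j' \<in> T \<and> x \<in> sec_elems j'" j]) (auto dest: sec_elems_disjoint)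

lemma moved_m_other: "\<forall>j\<in>T. x \<notin> sec_elems j \<Longrightarrow> moved_m m T x = m x"
  by (simp add: moved_m_def)

lemma moved_m_empty: "moved_m m {} = m"
  by (simp add: fun_eq_iff moved_m_def)

lemma moved_m_insert:
  assumes T: "T \<subseteq> sectors" and k: "k \<in> sectors" "k \<notin> T"
  shows "move_m \<iota> (moved_sigma T) (moved_m m T) (fst k) (snd k) = moved_m m (insert k T)"
proof
  fix x
  have T': "insert k T \<subseteq> sectors" using T k by simp
  have "(moved_sigma T ^^ i) (fst k) = (\<sigma> ^^ i) (fst k)" if "i \<le> snd k" for i
    using that moved_sigma_funpow[OF T k] by simp
  then have "(\<exists>i\<le>snd k. x = (moved_sigma T ^^ i) (fst k)) \<longleftrightarrow> (\<exists>i\<le>snd k. x = (\<sigma> ^^ i) (fst k))"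
    by auto
  also have "\<dots> \<longleftrightarrow> x \<in> sec_elems k"
    unfolding sec_elems_def by blast
  finally have in_k: "(\<exists>i\<le>snd k. x = (moved_sigma T ^^ i) (fst k)) \<longleftrightarrow> x \<in> sec_elems k" .
  have exit: "(moved_sigma T ^^ Suc (snd k)) (fst k) = sec_exit k"
    unfolding sec_exit_def by (rule moved_sigma_funpow[OF T k]) simp
  have "moved_m m T (sec_anchor k) = m (sec_anchor k)"
    using T sec_anchor_not_mem[OF k(1)] sec_elems_subset by (intro moved_m_other) blast
  then have "moved_m m T (\<iota> ((moved_sigma T ^^ Suc (snd k)) (fst k))) = moved_m m (insert k T) x"
    if "x \<in> sec_elems k"
    using moved_m_elem[OF T' _ that] unfolding exit sec_anchor_def[symmetric] by simp
  moreover have "moved_m m T x = moved_m m (insert k T) x" if "x \<notin> sec_elems k"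
  proof (cases "\<exists>j\<in>T. x \<in> sec_elems j")
    case True
    then obtain j where "j \<in> T" "x \<in> sec_elems j" by blast
    then show ?thesis using moved_m_elem[OF T] moved_m_elem[OF T', of j] by simp
  next
    case False
    then show ?thesis using that by (simp add: moved_m_other)
  qed
  ultimately show "move_m \<iota> (moved_sigma T) (moved_m m T) (fst k) (snd k) x = moved_m m (insert k T) x"
    unfolding move_m_def using in_k by presburger
qed

theorem kauer_move_closed_form: "kauer_move H' \<iota> \<sigma> m = (moved_sigma sectors, moved_m m sectors)"
proof -
  have "move \<iota> k (moved_sigma T, moved_m m T) = (moved_sigma (insert k T), moved_m m (insert k T))"
    if "T \<subseteq> sectors" "k \<in> sectors" "k \<notin> T" for T k
    using moved_sigma_insert[OF that] moved_m_insert[OF that] by (simp add: move_def split_beta)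
  then have "fold (move \<iota>) (SOME L. distinct L \<and> set L = sectors) (moved_sigma {}, moved_m m {})
    = (moved_sigma sectors, moved_m m sectors)"
    by (rule fold_some_enumeration[OF finite_sectors, where F = "\<lambda>T. (moved_sigma T, moved_m m T)"])
  then show ?thesis
    by (simp add: kauer_move_def moved_sigma_empty moved_m_empty)
qed

definition sec_degree :: "('a \<Rightarrow> bit) \<Rightarrow> 'a \<times> nat \<Rightarrow> bit" where
  "sec_degree d k = (\<Sum>i\<le>snd k. d ((\<sigma> ^^ i) (fst k)))"

definition sec_epsilon :: "'a set \<Rightarrow> 'a \<times> nat \<Rightarrow> bit" where
  "sec_epsilon H k = (if sec_exit k \<in> H_times H \<iota> then 1 else 0)"

definition skip_degree :: "('a \<Rightarrow> bit) \<Rightarrow> ('a \<times> nat) set \<Rightarrow> 'a \<Rightarrow> bit" where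
  "skip_degree d T y =
    (if y \<in> sec_pred ` T then d y + sec_degree d (inv_into T sec_pred y) else d y)"

definition moved_d :: "'a set \<Rightarrow> ('a \<Rightarrow> bit) \<Rightarrow> ('a \<times> nat) set \<Rightarrow> 'a \<Rightarrow> bit" where
  "moved_d H d T x =
    (if x \<in> sec_anchor ` T then
       (let j = inv_into T sec_anchor x in sec_degree d j + sec_epsilon H j)
     else if x \<in> sec_last ` T then
       (let j = inv_into T sec_last x in d x + sec_epsilon H j + skip_degree d T (sec_anchor j))
     else skip_degree d T x)"

lemma skip_degree_sec_pred:
  "T \<subseteq> sectors \<Longrightarrow> j \<in> T \<Longrightarrow> skip_degree d T (sec_pred j) = d (sec_pred j) + sec_degree d j"
  by (simp add: skip_degree_def inv_into_sectors[OF inj_on_sec_pred])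

lemma skip_degree_other: "y \<notin> sec_pred ` T \<Longrightarrow> skip_degree d T y = d y"
  by (simp add: skip_degree_def)

lemma skip_degree_insert:
  assumes T: "T \<subseteq> sectors" and k: "k \<in> sectors" "k \<notin> T"
  shows "skip_degree d (insert k T) y
    = skip_degree d T y + (if y = sec_pred k then sec_degree d k else 0)"
proof -
  have T': "insert k T \<subseteq> sectors" using T k by simp
  have pred_k: "sec_pred k \<notin> sec_pred ` T"
    using sectors_image_mem_iff[OF inj_on_sec_pred T k(1)] k(2) by simp
  consider "y = sec_pred k" | j where "j \<in> T" "y = sec_pred j" | "y \<notin> sec_pred ` insert k T"
    by blast
  then show ?thesis
  proof cases
    case 1
    then show ?thesis using pred_k skip_degree_sec_pred[OF T', of k] skip_degree_other by simp
  next
    case (2 j)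
    then have "y \<noteq> sec_pred k" using pred_k by (metis image_eqI)
    then show ?thesis
      using 2 skip_degree_sec_pred[OF T] skip_degree_sec_pred[OF T', of j] by simp
  next
    case 3
    then show ?thesis by (auto simp: skip_degree_other)
  qed
qed

lemma moved_d_anchor:
  "T \<subseteq> sectors \<Longrightarrow> j \<in> T \<Longrightarrow> moved_d H d T (sec_anchor j) = sec_degree d j + sec_epsilon H j"
  by (simp add: moved_d_def inv_into_sectors[OF inj_on_sec_anchor])

lemma moved_d_last:
  assumes "T \<subseteq> sectors" and "j \<in> T"
  shows "moved_d H d T (sec_last j) = d (sec_last j) + sec_epsilon H j + skip_degree d T (sec_anchor j)"
proof -
  have "sec_last j \<notin> sec_anchor ` T"
    using assms by (meson not_mem_sec_anchor_image sec_last_mem subsetD)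
  then show ?thesis
    unfolding moved_d_def using assms inv_into_sectors[OF inj_on_sec_last] by simp
qed

lemma moved_d_other:
  "x \<notin> sec_anchor ` T \<Longrightarrow> x \<notin> sec_last ` T \<Longrightarrow> moved_d H d T x = skip_degree d T x"
  by (simp add: moved_d_def)

lemma moved_d_empty: "moved_d H d {} = d"
  by (simp add: fun_eq_iff moved_d_def skip_degree_def)

lemma moved_d_sector_elem:
  assumes "T \<subseteq> sectors" "k \<in> sectors" "k \<notin> T" "i \<le> snd k"
  shows "moved_d H d T ((\<sigma> ^^ i) (fst k)) = d ((\<sigma> ^^ i) (fst k))"
  using sector_elem_notin_images[OF assms] by (simp add: moved_d_other skip_degree_other)

lemma moved_d_insert_other:
  assumes T: "T \<subseteq> sectors" and k: "k \<in> sectors" "k \<notin> T"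
    and x: "x \<noteq> sec_anchor k" "x \<noteq> sec_last k"
  shows "moved_d H d (insert k T) x
    = moved_d H d T x + (if moved_sigma T x = fst k then sec_degree d k else 0)"
proof -
  have T': "insert k T \<subseteq> sectors" using T k by simp
  consider j where "j \<in> T" "x = sec_anchor j" | j where "j \<in> T" "x = sec_last j"
    | "x \<notin> sec_anchor ` insert k T" "x \<notin> sec_last ` insert k T"
    using x by blast
  then show ?thesis
  proof cases
    case (1 j)
    then have "fst j \<noteq> fst k"
      using T k inj_on_fst_sectors by (metis inj_onD subsetD)
    then show ?thesis
      using 1 moved_d_anchor[OF T] moved_d_anchor[OF T', of j] moved_sigma_anchor[OF T] by simp
  next
    case (2 j)
    have "sec_anchor j \<noteq> sec_last k"
      using 2 T k sec_anchor_not_mem sec_last_mem by (metis subsetD)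
    then show ?thesis
      using 2 moved_d_last[OF T] moved_d_last[OF T', of j] moved_sigma_last[OF T]
        skip_degree_insert[OF T k] skip_eq_fst_iff[OF T k] by (simp add: ac_simps)
  next
    case 3
    then show ?thesis
      using moved_d_other moved_sigma_other skip_degree_insert[OF T k] skip_eq_fst_iff[OF T k]
      by simp
  qed
qed

lemma moved_d_insert:
  assumes T: "T \<subseteq> sectors" and k: "k \<in> sectors" "k \<notin> T"
  shows "move_d H \<iota> (moved_sigma T) (moved_d H d T) (fst k) (snd k) = moved_d H d (insert k T)"
proof
  fix x
  have T': "insert k T \<subseteq> sectors" using T k by simp
  have last: "(moved_sigma T ^^ snd k) (fst k) = sec_last k"
    unfolding sec_last_def by (rule moved_sigma_funpow[OF T k]) simp
  have exit: "(moved_sigma T ^^ Suc (snd k)) (fst k) = sec_exit k"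
    unfolding sec_exit_def by (rule moved_sigma_funpow[OF T k]) simp
  have degree: "(\<Sum>i\<le>snd k. moved_d H d T ((moved_sigma T ^^ i) (fst k))) = sec_degree d k"
    unfolding sec_degree_def
    by (rule sum.cong) (simp_all add: moved_sigma_funpow[OF T k] moved_d_sector_elem[OF T k])
  have ne: "sec_last k \<noteq> sec_anchor k"
    using k sec_anchor_not_mem sec_last_mem by metis
  have anchor_k: "moved_d H d T (sec_anchor k) = skip_degree d T (sec_anchor k)"
    "moved_sigma T (sec_anchor k) = skip T (sec_anchor k)"
    using sec_anchor_notin_images[OF T k] by (simp_all add: moved_d_other moved_sigma_other)
  have last_k: "moved_d H d T (sec_last k) = d (sec_last k)"
    using moved_d_sector_elem[OF T k, of "snd k"] by (simp add: sec_last_def)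
  have "move_d H \<iota> (moved_sigma T) (moved_d H d T) (fst k) (snd k) x =
    (if x = sec_anchor k then sec_degree d k + sec_epsilon H k
     else if x = sec_last k then moved_d H d T (sec_anchor k) + moved_d H d T (sec_last k)
       + sec_epsilon H k + (if moved_sigma T (sec_anchor k) = fst k then sec_degree d k else 0)
     else moved_d H d T x + (if moved_sigma T x = fst k then sec_degree d k else 0))"
    by (rule move_d_eq[OF bij_moved_sigma[OF T] last exit sec_anchor_def[symmetric] ne degree
          sec_epsilon_def[symmetric]])
  also have "\<dots> = moved_d H d (insert k T) x"
    using moved_d_anchor[OF T', of k] moved_d_last[OF T', of k] anchor_k last_k
      skip_degree_insert[OF T k] skip_eq_fst_iff[OF T k] moved_d_insert_other[OF T k]
    by (simp add: ac_simps)
  finally show "move_d H \<iota> (moved_sigma T) (moved_d H d T) (fst k) (snd k) x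
    = moved_d H d (insert k T) x" .
qed

theorem graded_kauer_move_closed_form:
  "graded_kauer_move H H' \<iota> \<sigma> m d = (moved_sigma sectors, moved_m m sectors, moved_d H d sectors)"
proof -
  have "graded_move H \<iota> k (moved_sigma T, moved_m m T, moved_d H d T)
    = (moved_sigma (insert k T), moved_m m (insert k T), moved_d H d (insert k T))"
    if "T \<subseteq> sectors" "k \<in> sectors" "k \<notin> T" for T k
    using moved_sigma_insert[OF that] moved_m_insert[OF that] moved_d_insert[OF that]
    by (simp add: graded_move_def split_beta)
  then have "fold (graded_move H \<iota>) (SOME L. distinct L \<and> set L = sectors)
      (moved_sigma {}, moved_m m {}, moved_d H d {})
    = (moved_sigma sectors, moved_m m sectors, moved_d H d sectors)"
    by (rule fold_some_enumeration[OF finite_sectors,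
          where F = "\<lambda>T. (moved_sigma T, moved_m m T, moved_d H d T)"])
  then show ?thesis
    by (simp add: graded_kauer_move_def moved_sigma_empty moved_m_empty moved_d_empty)
qed

end

section \<open>The covering\<close>

lemma bij_cov_sigma:
  assumes "\<sigma> permutes H"
  shows "bij (cov_sigma H \<sigma> d)"
proof (rule o_bij)
  define g where "g = (\<lambda>(h, i). (inv \<sigma> h, if inv \<sigma> h \<in> H then i + d (inv \<sigma> h) else i))"
  show "g \<circ> cov_sigma H \<sigma> d = id" "cov_sigma H \<sigma> d \<circ> g = id"
    using permutes_inverses[OF assms] by (auto simp: fun_eq_iff g_def cov_sigma_def)
qed

lemma inj_cov_iota: "inj \<iota> \<Longrightarrow> inj (cov_iota H \<iota>)"
  unfolding inj_def cov_iota_def H_times_def by (auto split: if_splits; metis)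

lemma cov_iota_mem_iff:
  "(\<And>x. \<iota> x \<in> H' \<longleftrightarrow> x \<in> H') \<Longrightarrow> cov_iota H \<iota> x \<in> H' \<times> UNIV \<longleftrightarrow> x \<in> H' \<times> UNIV"
  by (auto simp: cov_iota_def split: prod.split)

lemma cov_sigma_funpow:
  assumes "\<sigma> permutes H" and "h \<in> H"
  shows "(cov_sigma H \<sigma> d ^^ n) (h, i) = ((\<sigma> ^^ n) h, i + (\<Sum>l<n. d ((\<sigma> ^^ l) h)))"
proof (induction n)
  case (Suc n)
  then show ?case
    using permutes_in_funpow_image[OF assms, of n] by (simp add: cov_sigma_def add.assoc)
qed simp

lemma inv_cov_sigma:
  assumes "\<sigma> permutes H" and "h \<in> H"
  shows "inv (cov_sigma H \<sigma> d) (h, i) = (inv \<sigma> h, i + d (inv \<sigma> h))"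
proof (rule inv_f_eq[OF bij_is_inj[OF bij_cov_sigma[OF assms(1)]]])
  have "inv \<sigma> h \<in> H"
    using permutes_in_image[OF permutes_inv[OF assms(1)]] assms(2) by simp
  then show "cov_sigma H \<sigma> d (inv \<sigma> h, i + d (inv \<sigma> h)) = (h, i)"
    using permutes_inverses(1)[OF assms(1)] by (simp add: cov_sigma_def)
qed

lemma lifted_image_iff:
  fixes c :: "'a \<times> 'n \<Rightarrow> bit"
  assumes C: "\<And>h j r. ((h, j), r) \<in> C \<longleftrightarrow> (h, r) \<in> B"
    and g: "\<And>h j r. (h, r) \<in> B \<Longrightarrow> g ((h, j), r) = (f (h, r), j + c (h, r))"
  shows "(y, i) \<in> g ` C \<longleftrightarrow> y \<in> f ` B"
proof
  assume "(y, i) \<in> g ` C"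
  then obtain h j r where "((h, j), r) \<in> C" "(y, i) = g ((h, j), r)" by auto
  then show "y \<in> f ` B" using C g by force
next
  assume "y \<in> f ` B"
  then obtain h r where hr: "(h, r) \<in> B" "y = f (h, r)" by auto
  then have "g ((h, i + c (h, r)), r) = (y, i)" using g by simp
  then show "(y, i) \<in> g ` C" using hr C by (metis image_eqI)
qed

locale sector_cover =
  fixes H H' :: "'a set" and \<iota> \<sigma> :: "'a \<Rightarrow> 'a" and d :: "'a \<Rightarrow> bit"
  assumes sigma_permutes: "\<sigma> permutes H" and iota_permutes: "\<iota> permutes H"
    and finite_H: "finite H" and H'_subset: "H' \<subseteq> H" and iota_H': "\<iota> ` H' = H'"
begin

lemma iota_mem_iff: "\<iota> x \<in> H' \<longleftrightarrow> x \<in> H'"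
  using inj_image_mem_iff[OF permutes_inj[OF iota_permutes]] iota_H' by metis

sublocale base: sector_system H' \<iota> \<sigma>
  using permutes_bij[OF sigma_permutes] permutes_inj[OF iota_permutes] iota_mem_iff
    finite_subset[OF H'_subset finite_H]
  by unfold_locales

sublocale cover: sector_system "H' \<times> UNIV" "cov_iota H \<iota>" "cov_sigma H \<sigma> d"
  using bij_cov_sigma[OF sigma_permutes] inj_cov_iota[OF permutes_inj[OF iota_permutes]]
    cov_iota_mem_iff[OF iota_mem_iff] base.finite_H'
  by unfold_locales (simp_all add: finite_cartesian_product finite_UNIV_bit)

lemma sector_start_in_H: "(h, r) \<in> base.sectors \<Longrightarrow> h \<in> H"
  using base.sector_fst_mem H'_subset by fastforce

lemma cover_sectors_iff: "((h, j), r) \<in> cover.sectors \<longleftrightarrow> (h, r) \<in> base.sectors"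
proof (cases "h \<in> H")
  case True
  show ?thesis
    unfolding cover.mem_sectors_iff base.mem_sectors_iff cover.sec_exit_def base.sec_exit_def
      cover.sec_pred_def base.sec_pred_def
    by (simp add: cov_sigma_funpow[OF sigma_permutes True] inv_cov_sigma[OF sigma_permutes True]
        del: funpow.simps)
next
  case False
  have "((h, j), r) \<notin> cover.sectors"
    using cover.sector_fst_mem[of "((h, j), r)"] H'_subset False by auto
  then show ?thesis using False sector_start_in_H by blast
qed

lemma cover_sec_last:
  "(h, r) \<in> base.sectors \<Longrightarrow>
    cover.sec_last ((h, j), r) = (base.sec_last (h, r), j + (\<Sum>l<r. d ((\<sigma> ^^ l) h)))"
  unfolding cover.sec_last_def base.sec_last_def
  by (simp add: cov_sigma_funpow[OF sigma_permutes sector_start_in_H])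

lemma cover_sec_exit:
  "(h, r) \<in> base.sectors \<Longrightarrow>
    cover.sec_exit ((h, j), r) = (base.sec_exit (h, r), j + base.sec_degree d (h, r))"
  unfolding cover.sec_exit_def base.sec_exit_def base.sec_degree_def
  by (simp add: cov_sigma_funpow[OF sigma_permutes sector_start_in_H] lessThan_Suc_atMost
      del: funpow.simps)

lemma cover_sec_anchor:
  "(h, r) \<in> base.sectors \<Longrightarrow> cover.sec_anchor ((h, j), r)
    = (base.sec_anchor (h, r), j + (base.sec_degree d (h, r) + base.sec_epsilon H (h, r)))"
  unfolding cover.sec_anchor_def base.sec_anchor_def base.sec_epsilon_def
  by (simp add: cover_sec_exit cov_iota_def H_times_def add.assoc)

lemma cover_sec_pred:
  "(h, r) \<in> base.sectors \<Longrightarrow>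
    cover.sec_pred ((h, j), r) = (base.sec_pred (h, r), j + d (base.sec_pred (h, r)))"
  unfolding cover.sec_pred_def base.sec_pred_def
  by (simp add: inv_cov_sigma[OF sigma_permutes sector_start_in_H])

lemma cover_sec_elems:
  "(h, r) \<in> base.sectors \<Longrightarrow>
    x \<in> cover.sec_elems ((h, j), r) \<longleftrightarrow> (\<exists>l\<le>r. x = ((\<sigma> ^^ l) h, j + (\<Sum>i<l. d ((\<sigma> ^^ i) h))))"
  unfolding cover.sec_elems_def
  by (auto simp: cov_sigma_funpow[OF sigma_permutes sector_start_in_H])

lemma cover_sec_anchor_image_iff:
  "(y, i) \<in> cover.sec_anchor ` cover.sectors \<longleftrightarrow> y \<in> base.sec_anchor ` base.sectors"
  by (rule lifted_image_iff[where c = "\<lambda>k. base.sec_degree d k + base.sec_epsilon H k"])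
    (simp_all add: cover_sectors_iff cover_sec_anchor)

lemma cover_sec_last_image_iff:
  "(y, i) \<in> cover.sec_last ` cover.sectors \<longleftrightarrow> y \<in> base.sec_last ` base.sectors"
  by (rule lifted_image_iff[where c = "\<lambda>(h, r). \<Sum>l<r. d ((\<sigma> ^^ l) h)"])
    (simp_all add: cover_sectors_iff cover_sec_last)

lemma cover_sec_pred_image_iff:
  "(y, i) \<in> cover.sec_pred ` cover.sectors \<longleftrightarrow> y \<in> base.sec_pred ` base.sectors"
  by (rule lifted_image_iff[where c = "\<lambda>k. d (base.sec_pred k)"])
    (simp_all add: cover_sectors_iff cover_sec_pred)

lemma sec_anchor_in_H: "k \<in> base.sectors \<Longrightarrow> base.sec_anchor k \<in> H"
proof -
  assume "k \<in> base.sectors"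
  then have "fst k \<in> H" using sector_start_in_H by (cases k) simp
  then have "base.sec_exit k \<in> H"
    unfolding base.sec_exit_def by (rule permutes_in_funpow_image[OF sigma_permutes])
  then show ?thesis
    by (simp add: base.sec_anchor_def permutes_in_image[OF iota_permutes])
qed

lemma cover_skip:
  assumes "y \<in> H"
  shows "cover.skip cover.sectors (y, i)
    = (base.skip base.sectors y, i + base.skip_degree d base.sectors y)"
proof (cases "y \<in> base.sec_pred ` base.sectors")
  case True
  then obtain h r where k: "(h, r) \<in> base.sectors" and y: "y = base.sec_pred (h, r)" by auto
  define K where "K = ((h, i + d y), r)"
  have K: "K \<in> cover.sectors" using k by (simp add: K_def cover_sectors_iff)
  have "cover.sec_pred K = (y, i)" using k y by (simp add: K_def cover_sec_pred)
  then have "cover.skip cover.sectors (y, i) = cover.sec_exit K"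
    using cover.skip_sec_pred[OF subset_refl K] by simp
  then show ?thesis
    using k y base.skip_sec_pred[OF subset_refl k] base.skip_degree_sec_pred[OF subset_refl k]
    by (simp add: K_def cover_sec_exit add.assoc)
next
  case False
  then have "(y, i) \<notin> cover.sec_pred ` cover.sectors" using cover_sec_pred_image_iff by blast
  then have "cover.skip cover.sectors (y, i) = cov_sigma H \<sigma> d (y, i)" by (rule cover.skip_other)
  then show ?thesis
    using False assms by (simp add: base.skip_other base.skip_degree_other cov_sigma_def)
qed

lemma cover_moved_sigma:
  assumes "y \<in> H"
  shows "cover.moved_sigma cover.sectors (y, i) = cov_sigma H (base.moved_sigma base.sectors)
    (base.moved_d H d base.sectors) (y, i)"
proof -
  consider h r where "(h, r) \<in> base.sectors" "y = base.sec_anchor (h, r)"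
    | h r where "(h, r) \<in> base.sectors" "y = base.sec_last (h, r)"
    | "y \<notin> base.sec_anchor ` base.sectors" "y \<notin> base.sec_last ` base.sectors"
    by (metis imageE surj_pair)
  then have "cover.moved_sigma cover.sectors (y, i)
    = (base.moved_sigma base.sectors y, i + base.moved_d H d base.sectors y)"
  proof cases
    case (1 h r)
    define K where "K = ((h, i + (base.sec_degree d (h, r) + base.sec_epsilon H (h, r))), r)"
    have K: "K \<in> cover.sectors" using 1 by (simp add: K_def cover_sectors_iff)
    have "cover.sec_anchor K = (y, i)" using 1 by (simp add: K_def cover_sec_anchor)
    then show ?thesis
      using 1 cover.moved_sigma_anchor[OF subset_refl K] base.moved_sigma_anchor[OF subset_refl]
        base.moved_d_anchor[OF subset_refl]
      by (simp add: K_def add.assoc)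
  next
    case (2 h r)
    define A where "A = (\<Sum>l<r. d ((\<sigma> ^^ l) h))"
    define K where "K = ((h, i + A), r)"
    have K: "K \<in> cover.sectors" using 2 by (simp add: K_def cover_sectors_iff)
    have "cover.sec_last K = (y, i)" using 2 by (simp add: K_def A_def cover_sec_last)
    moreover have "base.sec_degree d (h, r) = A + d y"
      using 2 by (simp add: A_def base.sec_degree_def base.sec_last_def lessThan_Suc_atMost[symmetric])
    ultimately show ?thesis
      using 2 cover.moved_sigma_last[OF subset_refl K] base.moved_sigma_last[OF subset_refl]
        base.moved_d_last[OF subset_refl] cover_skip[OF sec_anchor_in_H]
      by (simp add: K_def cover_sec_anchor ac_simps)
  next
    case 3
    then have "(y, i) \<notin> cover.sec_anchor ` cover.sectors" "(y, i) \<notin> cover.sec_last ` cover.sectors"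
      using cover_sec_anchor_image_iff cover_sec_last_image_iff by blast+
    then show ?thesis
      using 3 cover_skip[OF assms]
      by (simp add: cover.moved_sigma_other base.moved_sigma_other base.moved_d_other)
  qed
  then show ?thesis using assms by (simp add: cov_sigma_def)
qed

lemma cover_moved_m:
  "cover.moved_m (cov_m m) cover.sectors (y, i) = cov_m (base.moved_m m base.sectors) (y, i)"
proof (cases "\<exists>k\<in>base.sectors. y \<in> base.sec_elems k")
  case True
  then obtain h r l where k: "(h, r) \<in> base.sectors" and l: "l \<le> r" "y = (\<sigma> ^^ l) h"
    by (auto simp: base.sec_elems_def)
  define K where "K = ((h, i + (\<Sum>j<l. d ((\<sigma> ^^ j) h))), r)"
  have K: "K \<in> cover.sectors" using k by (simp add: K_def cover_sectors_iff)
  have "(y, i) \<in> cover.sec_elems K"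
    using k l by (auto simp: K_def cover_sec_elems)
  moreover have "y \<in> base.sec_elems (h, r)"
    using l by (auto simp: base.sec_elems_def)
  ultimately show ?thesis
    using k cover.moved_m_elem[OF subset_refl K] base.moved_m_elem[OF subset_refl k]
    by (simp add: K_def cover_sec_anchor cov_m_def)
next
  case False
  have "(y, i) \<notin> cover.sec_elems K" if "K \<in> cover.sectors" for K
  proof -
    obtain h j r where K: "K = ((h, j), r)" by (metis surj_pair)
    then have "(h, r) \<in> base.sectors" using that cover_sectors_iff by simp
    then show ?thesis
      using False K by (auto simp: cover_sec_elems base.sec_elems_def)
  qed
  then show ?thesis
    using False by (simp add: cover.moved_m_other base.moved_m_other cov_m_def)
qed

theorem cover_of_graded_kauer_move:
  "case graded_kauer_move H H' \<iota> \<sigma> m d of (\<sigma>1, m1, d1) \<Rightarrow>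
     case kauer_move (H' \<times> UNIV) (cov_iota H \<iota>) (cov_sigma H \<sigma> d) (cov_m m) of (\<sigma>2, m2) \<Rightarrow>
     (\<forall>x \<in> cov_H H. cov_sigma H \<sigma>1 d1 x = \<sigma>2 x \<and> cov_m m1 x = m2 x)"
  unfolding base.graded_kauer_move_closed_form cover.kauer_move_closed_form
  using cover_moved_sigma cover_moved_m by (auto simp: cov_H_def)

end

theorem proposition3p18:
  fixes H H' :: "'h set" and \<iota> \<sigma> :: "'h \<Rightarrow> 'h" and m :: "'h \<Rightarrow> nat" and d :: "'h \<Rightarrow> bit"
  assumes "graded_skew_brauer_graph H \<iota> \<sigma> m d"
    and "H' \<subseteq> H" and "\<iota> ` H' = H'"
  shows "case graded_kauer_move H H' \<iota> \<sigma> m d of (\<sigma>1, m1, d1) \<Rightarrow>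
           case kauer_move (H' \<times> (UNIV :: bit set)) (cov_iota H \<iota>) (cov_sigma H \<sigma> d) (cov_m m)
             of (\<sigma>2, m2) \<Rightarrow>
           (\<forall>x \<in> cov_H H. cov_sigma H \<sigma>1 d1 x = \<sigma>2 x \<and> cov_m m1 x = m2 x)"
proof -
  interpret sector_cover H H' \<iota> \<sigma> d
    using assms by unfold_locales (auto simp: graded_skew_brauer_graph_def skew_brauer_graph_def)
  show ?thesis by (rule cover_of_graded_kauer_move)
qed

end
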